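(* Let $H^2\times H^2$ carry the product metric $\rho(\mathsf z,\mathsf w)=\sqrt{d_H(z_1,w_1)^2+d_H(z_2,w_2)^2}$, and for $\mathsf z,\mathsf w\in H^2\times H^2$ let $E(\mathsf z,\mathsf w)=\{\mathsf x: \rho(\mathsf x,\mathsf z)=\rho(\mathsf x,\mathsf w)\}$. For distinct $z,w\in H^2$ and $k\in\mathbb R$ let $S_k(z,w)=\{x\in H^2: d_H(x,z)^2-d_H(x,w)^2=k\}$, and for $\mathsf z=(z_1,z_2)$, $\mathsf w=(w_1,w_2)$ with $z_i\neq w_i$ let $E_k(\mathsf z,\mathsf w)=S_k(z_1,w_1)\times S_k(w_2,z_2)$; the spine of $E(\mathsf z,\mathsf w)$ is $E_0(\mathsf z,\mathsf w)$. For an isometry $\gamma$ of $H^2\times H^2$ and $\mathsf x\in H^2\times H^2$, a point $\mathsf y$ is called $\gamma$-visible to $\mathsf x$ if $\rho(\mathsf y,\mathsf x)\le\rho(\mathsf y,\gamma(\mathsf x))$ and $\rho(\mathsf y,\mathsf x)\le \rho(\mathsf y,\gamma^{-1}(\mathsf x))$, and $\gamma$-invisible otherwise; a set is $\gamma$-invisible to $\mathsf x$ if each of its points is. Let $\mathsf x,\mathsf y\in H^2\times H^2$ (with distinct coordinates, so that the spine is defined) and let $\gamma$ be an isometry of $H^2\times H^2$. Suppose $E(\mathsf x,\mathsf y)\cap E(\mathsf x,\gamma(\mathsf x))=\emptyset$ and $E(\mathsf x,\mathsf y)\cap E(\mathsf x,\gamma^{-1}(\mathsf x))=\emptyset$.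 Then $E(\mathsf x,\mathsf y)$ is $\gamma$-invisible to $\mathsf x$ if and only if the spine $E_0(\mathsf x,\mathsf y)$ is $\gamma$-invisible to $\mathsf x$.
   Context: $d_H$ is the hyperbolic distance on the hyperbolic plane $H^2$. *)

theory Defs
  imports "HOL-Analysis.Analysis"
begin

definition H2 :: "complex set" where
  "H2 = {z. Im z > 0}"

definition dH :: "complex \<Rightarrow> complex \<Rightarrow> real" where
  "dH z w = arcosh (1 + (cmod (z - w))^2 / (2 * Im z * Im w))"

definition HH :: "(complex \<times> complex) set" where
  "HH = H2 \<times> H2"

definition rho :: "complex \<times> complex \<Rightarrow> complex \<times> complex \<Rightarrow> real" where
  "rho z w = sqrt ((dH (fst z) (fst w))^2 + (dH (snd z) (snd w))^2)"

definition bisector :: "complex \<times> complex \<Rightarrow> complex \<times> complex \<Rightarrow> (complex \<times> complex) set" where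
  "bisector z w = {x \<in> HH. rho x z = rho x w}"

definition Sk :: "real \<Rightarrow> complex \<Rightarrow> complex \<Rightarrow> complex set" where
  "Sk k z w = {x \<in> H2. (dH x z)^2 - (dH x w)^2 = k}"

definition Ek :: "real \<Rightarrow> complex \<times> complex \<Rightarrow> complex \<times> complex \<Rightarrow> (complex \<times> complex) set" where
  "Ek k z w = Sk k (fst z) (fst w) \<times> Sk k (snd w) (snd z)"

definition spine :: "complex \<times> complex \<Rightarrow> complex \<times> complex \<Rightarrow> (complex \<times> complex) set" where
  "spine z w = Ek 0 z w"

definition isometry_HH :: "(complex \<times> complex \<Rightarrow> complex \<times> complex) \<Rightarrow> bool" where
  "isometry_HH g \<longleftrightarrow> bij_betw g HH HH \<and> (\<forall>x\<in>HH. \<forall>y\<in>HH. rho (g x) (g y) = rho x y)"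

definition iso_inv :: "(complex \<times> complex \<Rightarrow> complex \<times> complex) \<Rightarrow> complex \<times> complex \<Rightarrow> complex \<times> complex" where
  "iso_inv g = the_inv_into HH g"

definition visible :: "(complex \<times> complex \<Rightarrow> complex \<times> complex) \<Rightarrow> complex \<times> complex \<Rightarrow> complex \<times> complex \<Rightarrow> bool" where
  "visible g x y \<longleftrightarrow> rho y x \<le> rho y (g x) \<and> rho y x \<le> rho y (iso_inv g x)"

definition set_invisible :: "(complex \<times> complex \<Rightarrow> complex \<times> complex) \<Rightarrow> complex \<times> complex \<Rightarrow> (complex \<times> complex) set \<Rightarrow> bool" where
  "set_invisible g x A \<longleftrightarrow> (\<forall>y\<in>A. \<not> visible g x y)"

end

theory Submission
  imports Defs
begin

text \<open>
  The spine lies in the bisector, so one direction is trivial. Conversely, the two disjointness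
  hypotheses say that \<open>\<rho>(\<cdot>, x) - \<rho>(\<cdot>, \<gamma>\<^sup>\<plusminus>\<^sup>1 x)\<close> never vanishes on \<open>E(x, y)\<close>, so by the
  intermediate value theorem visibility is constant on every connected subset of \<open>E(x, y)\<close>.
  It therefore suffices to join every point of \<open>E(x, y)\<close> to the spine inside \<open>E(x, y)\<close>.
  Now \<open>E(x, y) = {(a, b). \<phi>\<^sub>1 a = \<phi>\<^sub>2 b}\<close> with \<open>\<phi>\<^sub>1 = d(\<cdot>, x\<^sub>1)\<^sup>2 - d(\<cdot>, y\<^sub>1)\<^sup>2\<close> and
  \<open>\<phi>\<^sub>2 = d(\<cdot>, y\<^sub>2)\<^sup>2 - d(\<cdot>, x\<^sub>2)\<^sup>2\<close>. Translating a point along the geodesic through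
  \<open>x\<^sub>1, y\<^sub>1\<close> changes \<open>\<phi>\<^sub>1\<close> strictly monotonically (by strict convexity of
  \<open>v \<mapsto> arcosh (c cosh v)\<^sup>2\<close>) until it reaches zero, and likewise for \<open>\<phi>\<^sub>2\<close>. Moving the
  first coordinate to \<open>\<phi>\<^sub>1 = 0\<close> and reparametrising the translation of the second coordinate
  so that \<open>\<phi>\<^sub>2\<close> keeps matching \<open>\<phi>\<^sub>1\<close> gives the required path to the spine.
\<close>

section \<open>Real Moebius transformations of the upper half-plane\<close>

definition mob :: "real \<Rightarrow> real \<Rightarrow> real \<Rightarrow> real \<Rightarrow> complex \<Rightarrow> complex" where
  "mob A B C D a = (of_real A * a + of_real B) / (of_real C * a + of_real D)"

lemma mob_denom_nonzero:
  assumes "Im a > 0" "A*D - B*C > 0"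
  shows "of_real C * a + of_real D \<noteq> 0"
proof
  assume h: "of_real C * a + of_real D = 0"
  hence "Im (of_real C * a + of_real D) = 0" by simp
  hence "C = 0" using assms by simp
  with h have "D = 0" by simp
  with \<open>C = 0\<close> assms show False by simp
qed

lemma Im_mob:
  assumes "Im a > 0" "A*D - B*C > 0"
  shows "Im (mob A B C D a) = (A*D - B*C) * Im a / (cmod (of_real C * a + of_real D))^2"
proof -
  obtain x y where a: "a = Complex x y" by (cases a)
  show ?thesis unfolding mob_def a
    by (simp add: Im_divide cmod_power2 field_simps complex_eq_iff)
qed

lemma Im_mob_pos:
  assumes "Im a > 0" "A*D - B*C > 0"
  shows "Im (mob A B C D a) > 0"
  using Im_mob[OF assms] mob_denom_nonzero[OF assms] assms by simp

lemma mob_diff: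
  assumes "Im a > 0" "Im b > 0" "A*D - B*C > 0"
  shows "mob A B C D a - mob A B C D b
       = of_real (A*D - B*C) * (a - b) / ((of_real C * a + of_real D) * (of_real C * b + of_real D))"
  using mob_denom_nonzero[OF assms(1,3)] mob_denom_nonzero[OF assms(2,3)]
  unfolding mob_def by (simp add: field_simps)

lemma dH_mob:
  assumes "Im a > 0" "Im b > 0" "A*D - B*C > 0"
  shows "dH (mob A B C D a) (mob A B C D b) = dH a b"
proof -
  let ?d = "A*D - B*C"
  let ?p = "cmod (of_real C * a + of_real D)" and ?q = "cmod (of_real C * b + of_real D)"
  have p: "?p > 0" using mob_denom_nonzero[OF assms(1,3)] by simp
  have q: "?q > 0" using mob_denom_nonzero[OF assms(2,3)] by simp
  have "cmod (mob A B C D a - mob A B C D b) = ?d * cmod (a - b) / (?p * ?q)"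
    unfolding mob_diff[OF assms] using assms(3)
    by (simp add: norm_divide norm_mult del: of_real_diff of_real_mult)
  moreover have "Im (mob A B C D a) = ?d * Im a / ?p^2" by (rule Im_mob[OF assms(1,3)])
  moreover have "Im (mob A B C D b) = ?d * Im b / ?q^2" by (rule Im_mob[OF assms(2,3)])
  moreover have "\<And>d n ia ib :: real. d > 0 \<Longrightarrow> ia > 0 \<Longrightarrow> ib > 0 \<Longrightarrow>
      (d*n/(?p*?q))^2 / (2*(d*ia/?p^2)*(d*ib/?q^2)) = n^2 / (2*ia*ib)"
    using p q by (simp add: field_simps power2_eq_square)
  ultimately have "(cmod (mob A B C D a - mob A B C D b))^2 / (2 * Im (mob A B C D a) * Im (mob A B C D b))
      = (cmod (a - b))^2 / (2 * Im a * Im b)"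
    using assms by (simp only:)
  thus ?thesis unfolding dH_def by simp
qed

lemma mob_inverse:
  assumes "Im a > 0" "A*D - B*C > 0"
  shows "mob D (-B) (-C) A (mob A B C D a) = a"
proof -
  let ?e = "of_real C * a + of_real D"
  have e: "?e \<noteq> 0" using mob_denom_nonzero[OF assms] .
  have d: "of_real (A*D - B*C) \<noteq> (0::complex)" using assms by (simp only: of_real_eq_0_iff)
  have num: "of_real D * ((of_real A * a + of_real B) / ?e) + of_real (-B) = of_real (A*D - B*C) * a / ?e"
    using e by (simp add: field_simps)
  have den: "of_real (-C) * ((of_real A * a + of_real B) / ?e) + of_real A = of_real (A*D - B*C) / ?e"
    using e by (simp add: field_simps)
  show ?thesis unfolding mob_def num den using e d by simp
qed

lemma continuous_on_mob:
  assumes "A*D - B*C > 0" "continuous_on S f" "\<And>s. s \<in> S \<Longrightarrow> Im (f s) > 0"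
  shows "continuous_on S (\<lambda>s. mob A B C D (f s))"
  unfolding mob_def using assms mob_denom_nonzero by (auto intro!: continuous_intros)

text \<open>The witness maps the geodesic through \<open>z\<close> and \<open>w\<close> (a vertical line, or the semicircle
  of centre \<open>c\<close> and radius \<open>R\<close>) to the imaginary axis.\<close>

lemma mob_to_imaginary_axis:
  assumes "Im z > 0" "z \<noteq> w"
  obtains A B C D where "A*D - B*C > 0" "Re (mob A B C D z) = 0" "Re (mob A B C D w) = 0"
proof (cases "Re z = Re w")
  case True
  show ?thesis
    by (rule that[where A = 1 and B = "- Re z" and C = 0 and D = 1]) (simp_all add: mob_def True)
next
  case False
  define c where "c = ((cmod w)^2 - (cmod z)^2) / (2 * (Re w - Re z))"
  define R where "R = cmod (z - of_real c)"
  have shift: "(cmod (a - of_real c))^2 = (cmod a)^2 - 2 * c * Re a + c^2" for a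
    by (simp add: cmod_power2 power2_diff algebra_simps)
  have "c * (2 * (Re w - Re z)) = (cmod w)^2 - (cmod z)^2" unfolding c_def using False by simp
  hence R2: "(cmod (w - of_real c))^2 = R^2"
    unfolding R_def shift by (simp add: algebra_simps)
  have R_pos: "R > 0" unfolding R_def using assms(1) by (auto simp: complex_eq_iff)
  have on_circle: "Re (mob 1 (R - c) (-1) (c + R) a) = 0" if "(cmod (a - of_real c))^2 = R^2" for a
  proof -
    obtain x y where v: "a - of_real c = Complex x y" by (cases "a - of_real c")
    have a: "a = Complex (x + c) y" using v by (simp add: complex_eq_iff)
    have xy: "x^2 + y^2 = R^2" using that v by (simp add: cmod_power2)
    have "Re (mob 1 (R - c) (-1) (c + R) a) = ((x + R) * (R - x) - y^2) / ((R - x)^2 + y^2)"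
      unfolding mob_def a by (simp add: Re_divide power2_eq_square algebra_simps)
    also have "(x + R) * (R - x) - y^2 = 0" using xy by (simp add: power2_eq_square algebra_simps)
    finally show ?thesis by simp
  qed
  show ?thesis
    by (rule that[where A = 1 and B = "R - c" and C = "-1" and D = "c + R"])
       (use R_pos on_circle R2 R_def in auto)
qed

text \<open>Along the imaginary axis \<open>cosh d = cosh (distance to the axis) \<cdot> cosh (shift along the axis)\<close>;
  the first factor is \<open>|m| / Im m\<close>.\<close>

lemma dH_dilation_imaginary_axis:
  assumes "Im m > 0" "q > 0"
  shows "dH (of_real (exp s) * m) (\<i> * of_real q) = arcosh (cmod m / Im m * cosh (s + ln (cmod m) - ln q))"
proof -
  obtain x y where m: "m = Complex x y" by (cases m)
  have y: "y > 0" using assms m by simp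
  have cm: "cmod m > 0" using assms(1) by (auto simp: complex_eq_iff)
  have e1: "exp (s + ln (cmod m) - ln q) = exp s * cmod m / q"
    using cm assms by (simp add: exp_add exp_diff)
  have e2: "exp (-(s + ln (cmod m) - ln q)) = q / (exp s * cmod m)"
    using cm assms by (simp add: exp_add exp_diff exp_minus field_simps)
  have c2: "(cmod m)^2 = x^2 + y^2" using m by (simp add: cmod_power2)
  have d2: "(cmod (of_real (exp s) * m - \<i> * of_real q))^2 = (exp s * x)^2 + (exp s * y - q)^2"
    by (simp add: m cmod_power2)
  have "\<And>E r x y q :: real. E > 0 \<Longrightarrow> r > 0 \<Longrightarrow> y > 0 \<Longrightarrow> q > 0 \<Longrightarrow> r^2 = x^2 + y^2 \<Longrightarrow>
      1 + ((E*x)^2 + (E*y - q)^2) / (2 * (E*y) * q) = r / y * ((E * r / q + q / (E * r)) / 2)"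
    by (simp add: field_simps power2_eq_square)
  hence "1 + (cmod (of_real (exp s) * m - \<i> * of_real q))^2 / (2 * Im (of_real (exp s) * m) * Im (\<i> * of_real q))
      = cmod m / Im m * cosh (s + ln (cmod m) - ln q)"
    unfolding cosh_def e1 e2 d2 using y cm assms c2 m by simp
  thus ?thesis unfolding dH_def by simp
qed

section \<open>Strict convexity of \<open>v \<mapsto> arcosh (c cosh v)\<^sup>2\<close>\<close>

context
  fixes c :: real
  assumes c_gt_1: "c > 1"
begin

text \<open>\<open>Wc v\<close> is the distance from a point at distance \<open>arcosh c\<close> from a geodesic to the point of
  the geodesic at distance \<open>v\<close> from its foot; \<open>Hc = Wc \<cdot> Wc' = (Wc\<^sup>2)' / 2\<close>.\<close>

definition "Wc v = arcosh (c * cosh v)"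
definition "Wc' v = c * sinh v / sqrt ((c * cosh v)^2 - 1)"
definition "Hc v = Wc v * Wc' v"

lemma c_cosh_gt_1: "c * cosh v > 1"
  using mult_strict_right_mono[OF c_gt_1, of "cosh v"] cosh_real_ge_1[of v] by linarith

lemma c_cosh_sq_minus_1_pos: "(c * cosh v)^2 - 1 > 0"
  using c_cosh_gt_1[of v] by (simp add: power2_eq_square) (metis less_1_mult)

lemma Hc_minus: "Hc (-v) = - Hc v"
  unfolding Hc_def Wc_def Wc'_def by simp

lemma Wc'_mono:
  assumes "0 \<le> v" "v \<le> v'"
  shows "Wc' v \<le> Wc' v'"
proof -
  define t t' K where "t = sinh v" and "t' = sinh v'" and "K = c^2 - 1"
  have K: "K > 0" unfolding K_def using c_gt_1 by (simp add: power2_eq_square) (metis less_1_mult)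
  have t: "0 \<le> t" "t \<le> t'" unfolding t_def t'_def using assms by auto
  have e: "(c * cosh u)^2 - 1 = c^2 * (sinh u)^2 + K" for u
    unfolding K_def by (simp add: power_mult_distrib cosh_square_eq algebra_simps)
  have "t^2 * K \<le> t'^2 * K" using K t by (intro mult_right_mono power_mono) auto
  hence "t^2 * (c^2 * t'^2 + K) \<le> t'^2 * (c^2 * t^2 + K)" by (simp add: algebra_simps)
  hence "sqrt (t^2 * (c^2 * t'^2 + K)) \<le> sqrt (t'^2 * (c^2 * t^2 + K))" by simp
  hence "t * sqrt (c^2 * t'^2 + K) \<le> t' * sqrt (c^2 * t^2 + K)"
    using t by (simp add: real_sqrt_mult)
  moreover have "sqrt (c^2 * t'^2 + K) > 0" "sqrt (c^2 * t^2 + K) > 0"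
    using K by (auto intro!: add_nonneg_pos)
  ultimately have "t / sqrt (c^2 * t^2 + K) \<le> t' / sqrt (c^2 * t'^2 + K)"
    by (simp add: divide_simps mult.commute)
  hence "c * (t / sqrt (c^2 * t^2 + K)) \<le> c * (t' / sqrt (c^2 * t'^2 + K))"
    using c_gt_1 by (intro mult_left_mono) auto
  thus ?thesis unfolding Wc'_def e t_def t'_def by simp
qed

lemma Hc_strict_mono_nonneg:
  assumes "0 \<le> v" "v < v'"
  shows "Hc v < Hc v'"
proof -
  have "c * cosh v < c * cosh v'" using assms c_gt_1 by (simp add: cosh_real_nonneg_less_iff)
  hence Wc_less: "Wc v < Wc v'" unfolding Wc_def using c_cosh_gt_1[of v] by simp
  have "Hc v \<le> Wc v * Wc' v'"
    unfolding Hc_def Wc_def using Wc'_mono[of v v'] assms c_cosh_gt_1[of v] by (intro mult_left_mono) auto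
  also have "\<dots> < Wc v' * Wc' v'"
  proof -
    have "Wc' v' > 0" unfolding Wc'_def using assms c_gt_1 c_cosh_sq_minus_1_pos[of v'] by simp
    thus ?thesis using Wc_less by simp
  qed
  finally show ?thesis unfolding Hc_def .
qed

lemma Hc_strict_mono: "strict_mono Hc"
proof (rule strict_monoI)
  fix v v' :: real assume "v < v'"
  have Hc0: "Hc 0 = 0" by (simp add: Hc_def Wc'_def)
  consider "0 \<le> v" | "v < 0" "v' \<le> 0" | "v < 0" "0 < v'" by linarith
  thus "Hc v < Hc v'"
  proof cases
    case 1 thus ?thesis using Hc_strict_mono_nonneg \<open>v < v'\<close> by blast
  next
    case 2 thus ?thesis using Hc_strict_mono_nonneg[of "-v'" "-v"] \<open>v < v'\<close> Hc_minus by simp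
  next
    case 3 thus ?thesis
      using Hc_strict_mono_nonneg[of 0 "-v"] Hc_strict_mono_nonneg[of 0 v'] Hc0 Hc_minus[of v] by simp
  qed
qed

lemma has_real_derivative_Wc_sq:
  "((\<lambda>u. (arcosh (c * cosh (u - l)))^2) has_real_derivative 2 * Hc (u - l)) (at u)"
proof -
  have "((\<lambda>u. c * cosh (u - l)) has_real_derivative c * sinh (u - l)) (at u)"
    by (auto intro!: derivative_eq_intros)
  from DERIV_chain2[OF arcosh_real_has_field_derivative[OF c_cosh_gt_1] this]
  have "((\<lambda>u. arcosh (c * cosh (u - l))) has_real_derivative
      (1 / sqrt ((c * cosh (u - l))^2 - 1)) * (c * sinh (u - l))) (at u)" .
  from DERIV_power_Suc[OF this, of 1] show ?thesis
    unfolding Hc_def Wc_def Wc'_def numeral_2_eq_2 by (simp add: algebra_simps)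
qed

end

lemma arcosh_cosh_sq_diff_less:
  fixes c l1 l2 u u' :: real
  assumes "c \<ge> 1" "l1 < l2" "u < u'"
  shows "(arcosh (c * cosh (u - l1)))^2 - (arcosh (c * cosh (u - l2)))^2
       < (arcosh (c * cosh (u' - l1)))^2 - (arcosh (c * cosh (u' - l2)))^2"
proof (cases "c = 1")
  case True
  have "arcosh (cosh v) = \<bar>v\<bar>" for v :: real
    by (metis arcosh_cosh_real abs_ge_zero cosh_real_abs)
  moreover have "(u - l1)^2 - (u - l2)^2 < (u' - l1)^2 - (u' - l2)^2"
  proof -
    have "((u' - l1)^2 - (u' - l2)^2) - ((u - l1)^2 - (u - l2)^2) = 2 * ((u' - u) * (l2 - l1))"
      by (simp add: power2_eq_square algebra_simps)
    moreover have "(u' - u) * (l2 - l1) > 0" using assms by simp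
    ultimately show ?thesis by linarith
  qed
  ultimately show ?thesis using True by simp
next
  case False
  hence c: "c > 1" using assms(1) by simp
  show ?thesis
  proof (rule DERIV_pos_imp_increasing[OF assms(3)])
    fix t
    show "\<exists>y. ((\<lambda>u. (arcosh (c * cosh (u - l1)))^2 - (arcosh (c * cosh (u - l2)))^2)
        has_real_derivative y) (at t) \<and> 0 < y"
      by (rule exI[of _ "2 * Hc c (t - l1) - 2 * Hc c (t - l2)"])
         (use DERIV_diff[OF has_real_derivative_Wc_sq[OF c] has_real_derivative_Wc_sq[OF c]]
            strict_monoD[OF Hc_strict_mono[OF c], of "t - l2" "t - l1"] assms(2) in auto)
  qed
qed

lemma arcosh_cosh_sq_diff_less_signed:
  fixes c l1 l2 u u' :: real
  assumes "c \<ge> 1" "(l2 - l1) * (u' - u) > 0"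
  shows "(arcosh (c * cosh (u - l1)))^2 - (arcosh (c * cosh (u - l2)))^2
       < (arcosh (c * cosh (u' - l1)))^2 - (arcosh (c * cosh (u' - l2)))^2"
proof (cases "l1 < l2")
  case True
  thus ?thesis using assms arcosh_cosh_sq_diff_less[of c l1 l2 u u'] by (simp add: zero_less_mult_iff)
next
  case False
  thus ?thesis using assms arcosh_cosh_sq_diff_less[of c l2 l1 u' u] by (simp add: zero_less_mult_iff)
qed

section \<open>Translations along a geodesic\<close>

definition dH_sq_diff :: "complex \<Rightarrow> complex \<Rightarrow> complex \<Rightarrow> real" where
  "dH_sq_diff z w a = (dH a z)^2 - (dH a w)^2"

lemma continuous_on_dH:
  assumes "continuous_on S f" "\<And>t. t \<in> S \<Longrightarrow> Im (f t) > 0" "Im c > 0"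
  shows "continuous_on S (\<lambda>t. dH (f t) c)"
  unfolding dH_def
proof (rule continuous_on_compose2[OF continuous_on_arcosh[OF order.refl]])
  show "continuous_on S (\<lambda>t. 1 + (cmod (f t - c))\<^sup>2 / (2 * Im (f t) * Im c))"
    using assms by (auto intro!: continuous_intros dest: assms(2))
  show "(\<lambda>t. 1 + (cmod (f t - c))\<^sup>2 / (2 * Im (f t) * Im c)) ` S \<subseteq> {1..}"
    using assms by (auto intro!: divide_nonneg_pos dest: assms(2))
qed

lemma continuous_on_dH_sq_diff:
  assumes "continuous_on S f" "\<And>t. t \<in> S \<Longrightarrow> Im (f t) > 0" "Im z > 0" "Im w > 0"
  shows "continuous_on S (\<lambda>t. dH_sq_diff z w (f t))"
  unfolding dH_sq_diff_def using assms by (intro continuous_intros continuous_on_dH) auto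

text \<open>The dilation by \<open>e\<^sup>\<plusminus>\<^sup>s\<close> is the translation along the imaginary axis, directed
  from \<open>\<i> q\<^sub>1\<close> towards \<open>\<i> q\<^sub>2\<close>; it keeps the distance \<open>arcosh c\<close> of \<open>a\<close> to the axis.\<close>

lemma dilation_path_dH_sq_diff:
  assumes "q1 > 0" "q2 > 0" "q1 \<noteq> q2" "Im a > 0"
  obtains \<gamma> :: "real \<Rightarrow> complex" and s0 where "\<gamma> 0 = a" "continuous_on UNIV \<gamma>" "\<forall>s. Im (\<gamma> s) > 0"
    "strict_mono (\<lambda>s. dH_sq_diff (\<i> * of_real q1) (\<i> * of_real q2) (\<gamma> s))"
    "dH_sq_diff (\<i> * of_real q1) (\<i> * of_real q2) (\<gamma> s0) = 0"
proof -
  define \<sigma> :: real where "\<sigma> = sgn (q2 - q1)"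
  define c where "c = cmod a / Im a"
  define L where "L = ln (cmod a)"
  define \<gamma> where "\<gamma> s = of_real (exp (\<sigma> * s)) * a" for s
  have dH_sq_diff_\<gamma>: "dH_sq_diff (\<i> * of_real q1) (\<i> * of_real q2) (\<gamma> s) =
      (arcosh (c * cosh (\<sigma> * s + L - ln q1)))^2 - (arcosh (c * cosh (\<sigma> * s + L - ln q2)))^2" for s
    unfolding dH_sq_diff_def \<gamma>_def c_def L_def
    using dH_dilation_imaginary_axis[OF assms(4)] assms(1,2) by simp
  have c: "c \<ge> 1" unfolding c_def using assms(4) abs_Im_le_cmod[of a] by simp
  have \<sigma>_sq: "\<sigma> * \<sigma> = 1" unfolding \<sigma>_def using assms(3) by (auto simp: sgn_if)
  have \<sigma>_dir: "(ln q2 - ln q1) * \<sigma> > 0"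
    unfolding \<sigma>_def using assms(1-3) by (cases "q1 < q2") (auto simp: sgn_if mult_neg_neg)
  define t0 where "t0 = \<sigma> * ((ln q1 + ln q2) / 2 - L)"
  show ?thesis
  proof (rule that[of \<gamma> t0])
    show "\<gamma> 0 = a" "continuous_on UNIV \<gamma>" "\<forall>s. Im (\<gamma> s) > 0"
      unfolding \<gamma>_def using assms(4) by (auto intro!: continuous_intros)
    show "strict_mono (\<lambda>s. dH_sq_diff (\<i> * of_real q1) (\<i> * of_real q2) (\<gamma> s))"
    proof (rule strict_monoI)
      fix s s' :: real assume "s < s'"
      have "(ln q2 - ln q1) * ((\<sigma> * s' + L) - (\<sigma> * s + L)) = ((ln q2 - ln q1) * \<sigma>) * (s' - s)"
        by (simp add: algebra_simps)
      also have "\<dots> > 0" using \<sigma>_dir \<open>s < s'\<close> by simp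
      finally show "dH_sq_diff (\<i> * of_real q1) (\<i> * of_real q2) (\<gamma> s)
          < dH_sq_diff (\<i> * of_real q1) (\<i> * of_real q2) (\<gamma> s')"
        unfolding dH_sq_diff_\<gamma> by (rule arcosh_cosh_sq_diff_less_signed[OF c])
    qed
    have "\<sigma> * t0 = (ln q1 + ln q2) / 2 - L"
      unfolding t0_def using \<sigma>_sq by (simp add: mult.assoc[symmetric])
    hence "\<sigma> * t0 + L - ln q2 = - (\<sigma> * t0 + L - ln q1)" by (simp add: field_simps)
    thus "dH_sq_diff (\<i> * of_real q1) (\<i> * of_real q2) (\<gamma> t0) = 0"
      unfolding dH_sq_diff_\<gamma> by (metis cosh_minus diff_self)
  qed
qed

lemma translation_path_dH_sq_diff:
  assumes "Im z > 0" "Im w > 0" "z \<noteq> w" "Im a > 0"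
  obtains \<gamma> :: "real \<Rightarrow> complex" and s0 where "\<gamma> 0 = a" "continuous_on UNIV \<gamma>" "\<forall>s. Im (\<gamma> s) > 0"
    "strict_mono (\<lambda>s. dH_sq_diff z w (\<gamma> s))" "dH_sq_diff z w (\<gamma> s0) = 0"
proof -
  obtain A B C D where det: "A*D - B*C > 0"
    and Re_z: "Re (mob A B C D z) = 0" and Re_w: "Re (mob A B C D w) = 0"
    by (rule mob_to_imaginary_axis[OF assms(1,3)])
  define M where "M = mob A B C D"
  define Mi where "Mi = mob D (-B) (-C) A"
  have det_inv: "D*A - (-B)*(-C) > 0" using det by (simp add: algebra_simps)
  have M_pos: "Im (M b) > 0" if "Im b > 0" for b unfolding M_def using Im_mob_pos[OF that det] .
  have Mi_M: "Mi (M b) = b" if "Im b > 0" for b unfolding Mi_def M_def using mob_inverse[OF that det] .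
  define q1 q2 where "q1 = Im (M z)" and "q2 = Im (M w)"
  have q: "q1 > 0" "q2 > 0" unfolding q1_def q2_def using M_pos assms by auto
  have Mz: "M z = \<i> * of_real q1" and Mw: "M w = \<i> * of_real q2"
    using Re_z Re_w unfolding q1_def q2_def M_def by (simp_all add: complex_eq_iff)
  have "q1 \<noteq> q2"
  proof
    assume "q1 = q2"
    hence "Mi (M z) = Mi (M w)" using Mz Mw by simp
    thus False using Mi_M assms by simp
  qed
  then obtain \<delta> :: "real \<Rightarrow> complex" and s0 where \<delta>: "\<delta> 0 = M a" "continuous_on UNIV \<delta>"
      "\<forall>s. Im (\<delta> s) > 0" "strict_mono (\<lambda>s. dH_sq_diff (M z) (M w) (\<delta> s))"
      "dH_sq_diff (M z) (M w) (\<delta> s0) = 0"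
    unfolding Mz Mw by (rule dilation_path_dH_sq_diff[OF q _ M_pos[OF assms(4)]])
  have dH_Mi: "dH (Mi b) u = dH b (M u)" if "Im b > 0" "Im u > 0" for b u
    using dH_mob[OF that(1) M_pos[OF that(2)] det_inv] Mi_M[OF that(2)] unfolding Mi_def by simp
  have "dH_sq_diff z w (Mi (\<delta> s)) = dH_sq_diff (M z) (M w) (\<delta> s)" for s
    unfolding dH_sq_diff_def using dH_Mi \<delta>(3) assms(1,2) by simp
  moreover have "Im (Mi (\<delta> s)) > 0" for s unfolding Mi_def using Im_mob_pos[OF _ det_inv] \<delta>(3) by simp
  ultimately show ?thesis
    using that[of "Mi \<circ> \<delta>" s0] \<delta> Mi_M[OF assms(4)] continuous_on_mob[OF det_inv \<delta>(2)]
    unfolding Mi_def by (simp add: comp_def)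
qed

section \<open>Joining the bisector to its spine\<close>

lemma continuous_reparametrization:
  fixes f :: "'a::topological_space \<Rightarrow> 'b::t2_space" and g :: "'c::topological_space \<Rightarrow> 'b"
  assumes "continuous_on I f" "continuous_on J g" "compact J" "inj_on g J" "f ` I \<subseteq> g ` J"
  obtains \<sigma> where "continuous_on I \<sigma>" "\<forall>s\<in>I. g (\<sigma> s) = f s"
proof
  let ?g' = "the_inv_into J g"
  have "continuous_on (g ` J) ?g'"
    using assms(2-4) by (intro continuous_on_inv) (auto simp: the_inv_into_f_f)
  thus "continuous_on I (?g' \<circ> f)"
    using assms(1,5) by (intro continuous_on_compose) (auto intro: continuous_on_subset)
  show "\<forall>s\<in>I. g ((?g' \<circ> f) s) = f s"
  proof
    fix s assume "s \<in> I"
    hence "f s \<in> g ` J" using assms(5) by blast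
    thus "g ((?g' \<circ> f) s) = f s" using f_the_inv_into_f[OF assms(4)] by simp
  qed
qed

lemma mono_image_closed_segment:
  fixes f :: "real \<Rightarrow> real"
  assumes "mono f"
  shows "f ` closed_segment a b \<subseteq> closed_segment (f a) (f b)"
proof -
  have "f ` closed_segment a b \<subseteq> closed_segment (f a) (f b)" if "a \<le> b" for a b
    using that monoD[OF assms, of a b] by (auto simp: closed_segment_eq_real_ivl intro: monoD[OF assms])
  thus ?thesis by (metis closed_segment_commute nle_le)
qed

lemma level_matching_reparametrization:
  fixes f g :: "real \<Rightarrow> real"
  assumes "continuous_on UNIV f" "mono f" "continuous_on UNIV g" "strict_mono g"
    and "f 0 = g 0" "f s1 = g s2"
  obtains \<sigma> where "continuous_on (closed_segment 0 s1) \<sigma>" "\<sigma> 0 = 0"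
    "\<forall>s\<in>closed_segment 0 s1. g (\<sigma> s) = f s"
proof -
  define I J where "I = closed_segment 0 s1" and "J = closed_segment 0 s2"
  have J: "compact J" "inj_on g J"
    unfolding J_def by (simp_all add: strict_mono_imp_inj_on[OF assms(4)])
  have "f ` I \<subseteq> closed_segment (f 0) (f s1)"
    unfolding I_def by (rule mono_image_closed_segment[OF assms(2)])
  also have "\<dots> \<subseteq> g ` J"
  proof (rule closed_segment_subset)
    have "connected (g ` J)"
      unfolding J_def by (rule connected_continuous_image[OF continuous_on_subset[OF assms(3)]]) auto
    thus "convex (g ` J)" by (simp add: is_interval_connected_1 [symmetric] is_interval_convex_1)
    show "f 0 \<in> g ` J" "f s1 \<in> g ` J" using assms(5,6) unfolding J_def by auto
  qed
  finally have "f ` I \<subseteq> g ` J" .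
  with J obtain \<sigma> where \<sigma>: "continuous_on I \<sigma>" "\<forall>s\<in>I. g (\<sigma> s) = f s"
    by (rule continuous_reparametrization[OF continuous_on_subset[OF assms(1) subset_UNIV]
        continuous_on_subset[OF assms(3) subset_UNIV]])
  have "g (\<sigma> 0) = g 0" using \<sigma>(2) assms(5) unfolding I_def by simp
  hence "\<sigma> 0 = 0" using strict_mono_eq[OF assms(4)] by blast
  thus ?thesis using that \<sigma> unfolding I_def by blast
qed

lemma bisector_iff:
  "p \<in> bisector x y \<longleftrightarrow> p \<in> HH \<and> dH_sq_diff (fst x) (fst y) (fst p) = dH_sq_diff (snd y) (snd x) (snd p)"
proof -
  have "rho p x = rho p y \<longleftrightarrow>
      (dH (fst p) (fst x))^2 + (dH (snd p) (snd x))^2 = (dH (fst p) (fst y))^2 + (dH (snd p) (snd y))^2"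
    unfolding rho_def by (simp add: real_sqrt_eq_iff)
  thus ?thesis unfolding bisector_def dH_sq_diff_def by auto
qed

lemma spine_iff:
  "p \<in> spine x y \<longleftrightarrow>
     p \<in> HH \<and> dH_sq_diff (fst x) (fst y) (fst p) = 0 \<and> dH_sq_diff (snd y) (snd x) (snd p) = 0"
  unfolding spine_def Ek_def Sk_def HH_def dH_sq_diff_def by (cases p) auto

lemma spine_subset_bisector: "spine x y \<subseteq> bisector x y"
  by (auto simp: spine_iff bisector_iff)

lemma mem_HH_iff: "p \<in> HH \<longleftrightarrow> Im (fst p) > 0 \<and> Im (snd p) > 0"
  unfolding HH_def H2_def by (cases p) auto

lemma bisector_connected_to_spine:
  assumes "x \<in> HH" "y \<in> HH" "fst x \<noteq> fst y" "snd x \<noteq> snd y" "p \<in> bisector x y"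
  obtains C where "connected C" "C \<subseteq> bisector x y" "p \<in> C" "C \<inter> spine x y \<noteq> {}"
proof -
  obtain x1 x2 where x: "x = (x1, x2)" by (cases x)
  obtain y1 y2 where y: "y = (y1, y2)" by (cases y)
  obtain p1 p2 where p: "p = (p1, p2)" by (cases p)
  have p_bisector: "dH_sq_diff x1 y1 p1 = dH_sq_diff y2 x2 p2"
    using assms(5) unfolding bisector_iff x y p by simp
  have pos: "Im x1 > 0" "Im x2 > 0" "Im y1 > 0" "Im y2 > 0" "Im p1 > 0" "Im p2 > 0"
    using assms(1,2,5) unfolding x y p bisector_def by (simp_all add: mem_HH_iff)
  have distinct: "x1 \<noteq> y1" "y2 \<noteq> x2" using assms(3,4) unfolding x y by auto
  obtain \<gamma>1 :: "real \<Rightarrow> complex" and s1 where \<gamma>1: "\<gamma>1 0 = p1" "continuous_on UNIV \<gamma>1"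
      "\<forall>s. Im (\<gamma>1 s) > 0" "strict_mono (\<lambda>s. dH_sq_diff x1 y1 (\<gamma>1 s))" "dH_sq_diff x1 y1 (\<gamma>1 s1) = 0"
    by (rule translation_path_dH_sq_diff[OF pos(1,3) distinct(1) pos(5)])
  obtain \<gamma>2 :: "real \<Rightarrow> complex" and s2 where \<gamma>2: "\<gamma>2 0 = p2" "continuous_on UNIV \<gamma>2"
      "\<forall>s. Im (\<gamma>2 s) > 0" "strict_mono (\<lambda>s. dH_sq_diff y2 x2 (\<gamma>2 s))" "dH_sq_diff y2 x2 (\<gamma>2 s2) = 0"
    by (rule translation_path_dH_sq_diff[OF pos(4,2) distinct(2) pos(6)])
  define f where "f s = dH_sq_diff x1 y1 (\<gamma>1 s)" for s
  define g where "g s = dH_sq_diff y2 x2 (\<gamma>2 s)" for s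
  define I where "I = closed_segment 0 s1"
  have "continuous_on UNIV f" "continuous_on UNIV g"
    unfolding f_def g_def by (rule continuous_on_dH_sq_diff; use \<gamma>1 \<gamma>2 pos in simp)+
  moreover have "mono f" unfolding f_def using \<gamma>1(4) by (rule strict_mono_mono)
  moreover have "f 0 = g 0" "f s1 = g s2"
    using p_bisector \<gamma>1(1,5) \<gamma>2(1,5) unfolding f_def g_def by simp_all
  ultimately obtain \<sigma> where \<sigma>: "continuous_on I \<sigma>" "\<sigma> 0 = 0" "\<forall>s\<in>I. g (\<sigma> s) = f s"
    using level_matching_reparametrization[of f g s1 s2] \<gamma>2(4) unfolding I_def g_def by blast
  define P where "P s = (\<gamma>1 s, \<gamma>2 (\<sigma> s))" for s
  show ?thesis
  proof (rule that[of "P ` I"])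
    have "continuous_on I P" unfolding P_def
      by (intro continuous_on_Pair continuous_on_subset[OF \<gamma>1(2)]
          continuous_on_compose2[OF \<gamma>2(2) \<sigma>(1)]) auto
    thus "connected (P ` I)" unfolding I_def by (rule connected_continuous_image) simp
    show "P ` I \<subseteq> bisector x y"
      using \<sigma>(3) \<gamma>1(3) \<gamma>2(3) unfolding P_def x y f_def g_def by (auto simp: bisector_iff mem_HH_iff)
    have "P 0 = p" unfolding P_def p using \<sigma>(2) \<gamma>1(1) \<gamma>2(1) by simp
    moreover have "0 \<in> I" "s1 \<in> I" unfolding I_def by simp_all
    ultimately show "p \<in> P ` I" by (metis image_eqI)
    have "P s1 \<in> spine x y"
      using \<sigma>(3) \<open>s1 \<in> I\<close> \<gamma>1(3,5) \<gamma>2(3) unfolding P_def spine_iff mem_HH_iff x y f_def g_def by simp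
    thus "P ` I \<inter> spine x y \<noteq> {}" using \<open>s1 \<in> I\<close> by blast
  qed
qed

section \<open>Visibility is constant on connected subsets of the bisector\<close>

lemma continuous_on_rho:
  assumes "continuous_on S P" "\<And>t. t \<in> S \<Longrightarrow> P t \<in> HH" "c \<in> HH"
  shows "continuous_on S (\<lambda>t. rho (P t) c)"
  unfolding rho_def using assms
  by (intro continuous_intros continuous_on_dH) (auto simp: mem_HH_iff)

lemma closer_on_connected:
  assumes "connected C" "C \<subseteq> HH" "x \<in> HH" "c \<in> HH" "C \<inter> bisector x c = {}"
    and "p \<in> C" "q \<in> C" "rho p x \<le> rho p c"
  shows "rho q x \<le> rho q c"
proof (rule ccontr)
  assume "\<not> rho q x \<le> rho q c"
  define F where "F t = rho t x - rho t c" for t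
  have "connected (F ` C)"
    unfolding F_def using assms(1-4)
    by (intro connected_continuous_image continuous_intros continuous_on_rho[OF continuous_on_id]) auto
  moreover have "F p \<le> 0" "0 \<le> F q" using assms(8) \<open>\<not> rho q x \<le> rho q c\<close> by (auto simp: F_def)
  ultimately have "0 \<in> F ` C" using connected_contains_Icc[of "F ` C" "F p" "F q"] assms(6,7) by auto
  then obtain t where "t \<in> C" "rho t x = rho t c" by (auto simp: F_def)
  thus False using assms(2,5) by (auto simp: bisector_def)
qed

theorem mainTheorem3:
  fixes x y :: "complex \<times> complex"
    and g :: "complex \<times> complex \<Rightarrow> complex \<times> complex"
  assumes "x \<in> HH" and "y \<in> HH"
    and "fst x \<noteq> fst y" and "snd x \<noteq> snd y"
    and "isometry_HH g"
    and "bisector x y \<inter> bisector x (g x) = {}"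
    and "bisector x y \<inter> bisector x (iso_inv g x) = {}"
  shows "set_invisible g x (bisector x y) \<longleftrightarrow> set_invisible g x (spine x y)"
proof
  assume "set_invisible g x (bisector x y)"
  thus "set_invisible g x (spine x y)" using spine_subset_bisector unfolding set_invisible_def by blast
next
  assume spine_invisible: "set_invisible g x (spine x y)"
  have bij: "bij_betw g HH HH" using assms(5) unfolding isometry_HH_def by simp
  have images: "g x \<in> HH" "iso_inv g x \<in> HH"
    using bij assms(1) unfolding iso_inv_def by (auto simp: bij_betw_def the_inv_into_into)
  show "set_invisible g x (bisector x y)" unfolding set_invisible_def
  proof (intro ballI notI)
    fix p assume p: "p \<in> bisector x y" and "visible g x p"
    obtain C where C: "connected C" "C \<subseteq> bisector x y" "p \<in> C" "C \<inter> spine x y \<noteq> {}"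
      using bisector_connected_to_spine[OF assms(1-4) p] .
    then obtain q where q: "q \<in> C" "q \<in> spine x y" by blast
    have "C \<subseteq> HH" using C(2) by (auto simp: bisector_def)
    hence "visible g x q"
      using closer_on_connected[OF C(1) _ assms(1) images(1) _ C(3) q(1)]
        closer_on_connected[OF C(1) _ assms(1) images(2) _ C(3) q(1)]
        \<open>visible g x p\<close> C(2) assms(6,7) unfolding visible_def by blast
    thus False using spine_invisible q(2) unfolding set_invisible_def by blast
  qed
qed

end
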